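(* (a) Two elements $[\gamma,x,y],[\gamma',x',y']\in X_{\mathrm{rss}}$ are equivalent if and only if $[\bar\gamma\gamma,x,y]$ and $[\bar\gamma'\gamma',x',y']$ lie in the same $\mathrm{GL}_n(E)$-orbit of $M_n(E)$. (b) Two elements $[\zeta,z],[\zeta',z']\in Y^\beta_{\mathrm{rss}}$ are equivalent if and only if $[\beta^{-1}\zeta^*\beta\zeta,z,\beta^{-1}z^*]$ and $[\beta^{-1}\zeta'^*\beta\zeta',z',\beta^{-1}z'^*]$ lie in the same $\mathrm{GL}_n(E)$-orbit of $M_n(E)$.
   Context: $E/F$ is a quadratic extension of fields of characteristic $0$ (number fields or local fields), $x\mapsto\bar x$ its Galois involution, $g^*={}^t\bar g$, $F^-=\{x\in E:\bar x=-x\}$; $F_n,E_n$ are row vectors and $F^{-,n},E^n$ column vectors. $M_n(E)=\mathrm{Mat}_n(E)\times E_n\times E^n$ with right $\mathrm{GL}_n(E)$-action $[\xi,x,y].h=[h^{-1}\xi h,xh,h^{-1}y]$; $[\xi,x,y]$ is regular semisimple if $\xi$ is regular semisimple, $x,x\xi,\dots,x\xi^{n-1}$ span $E_n$, and $y,\xi y,\dots,\xi^{n-1}y$ span $E^n$. $\gamma$ is normal if $\bar\gamma\gamma\in\mathrm{GL}_n(F)$; $\sigma$-conjugation is $\gamma\mapsto g^{-1}\gamma\bar g$. $S$ is a set of normal representatives of the $\sigma$-conjugacy classes of $\gamma$ with $\bar\gamma\gamma$ regular semisimple, $T_\gamma=\{g:g^{-1}\gamma\bar g=\gamma\}$, $X=S\times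 F_n\times F^{-,n}$, $X_{\mathrm{rss}}=\{[\gamma,x,y]:[\bar\gamma\gamma,x,y]\in M_n(E)\text{ regular semisimple}\}$, and $[\gamma,x,y]\sim[\gamma',x',y']$ if $\gamma=\gamma'$ and $[xt,t^{-1}y]=[x',y']$ for some $t\in T_\gamma$. For an invertible skew-Hermitian $\beta$ ($\beta^*=-\beta$), $\mathrm{U}_n^\beta(F)=\{h:h^*\beta h=\beta\}$; $\zeta$ is normal w.r.t. $\beta$ if it commutes with $\beta^{-1}\zeta^*\beta\zeta$; $R^\beta$ is a set of normal representatives of the regular semisimple orbits of $\mathrm{U}_n^\beta(F)\times\mathrm{U}_n^\beta(F)$ acting on $\mathrm{GL}_n(E)$ by $\zeta.(g,h)=g^{-1}\zeta h$, whose elements satisfy $\beta^{-1}\zeta^*\beta\zeta\in\{\bar a a:a\in\mathrm{GL}_n(E)\}$; $T_\zeta$ is the centralizer of $\zeta$ in $\mathrm{U}_n^\beta(F)$; $Y^\beta=R^\beta\times E_n$, $Y^\beta_{\mathrm{rss}}=\{[\zeta,z]:[\beta^{-1}\zeta^*\beta\zeta,z,\beta^{-1}z^*]\text{ regular semisimple}\}$, and $[\zeta,z]\sim[\zeta',z']$ if $\zeta=\zeta'$ and $zt=z'$ for some $t\in T_\zeta$. *)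

theory Defs
  imports "HOL-Analysis.Analysis" "HOL-Computational_Algebra.Polynomial"
begin

text \<open>The quadratic extension E/F is modelled by a field 'e of characteristic 0 together with
a nontrivial field automorphism cj of order 2 (the Galois involution); F is its fixed field.
n x n matrices are of type 'e^'n^'n ('n a finite index type, n = CARD('n)).
Row vectors (E_n) and column vectors (E^n) are both of type 'e^'n; a row vector x acts
on matrices on the right by  x v* h,  a matrix acts on a column vector y by  h *v y.\<close>

definition quad_involution :: "('e::field_char_0 \<Rightarrow> 'e) \<Rightarrow> bool" where
  "quad_involution cj \<longleftrightarrow>
     (\<forall>a b. cj (a + b) = cj a + cj b) \<and> (\<forall>a b. cj (a * b) = cj a * cj b) \<and> cj 1 = 1 \<and>
     (\<forall>a. cj (cj a) = a) \<and> (\<exists>a. cj a \<noteq> a)"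

definition vbar :: "('e \<Rightarrow> 'e) \<Rightarrow> 'e^'n \<Rightarrow> 'e^'n" where
  "vbar cj v = (\<chi> i. cj (v $ i))"

definition mbar :: "('e \<Rightarrow> 'e) \<Rightarrow> 'e^'n^'m \<Rightarrow> 'e^'n^'m" where
  "mbar cj A = (\<chi> i j. cj (A $ i $ j))"

definition mstar :: "('e \<Rightarrow> 'e) \<Rightarrow> 'e^'n^'m \<Rightarrow> 'e^'m^'n" where
  "mstar cj A = transpose (mbar cj A)"

definition GL :: "('e::field ^'n^'n) set" where
  "GL = {g. invertible g}"

definition Fvecs :: "('e \<Rightarrow> 'e) \<Rightarrow> ('e::field ^'n) set" where
  "Fvecs cj = {x. \<forall>i. cj (x $ i) = x $ i}"

definition Fminus_vecs :: "('e \<Rightarrow> 'e) \<Rightarrow> ('e::field ^'n) set" where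
  "Fminus_vecs cj = {y. \<forall>i. cj (y $ i) = - y $ i}"

definition matpow :: "'e::semiring_1^'n^'n \<Rightarrow> nat \<Rightarrow> 'e^'n^'n" where
  "matpow A k = ((\<lambda>B. B ** A) ^^ k) (mat 1)"

definition charpoly :: "'e::field^'n^'n \<Rightarrow> 'e poly" where
  "charpoly A = det (\<chi> i j. (if i = j then [:0, 1:] else 0) - [:A $ i $ j:])"

text \<open>A matrix is regular semisimple iff its characteristic polynomial has distinct roots
(in an algebraic closure), i.e. is separable: coprime to its derivative.\<close>
definition reg_ss :: "'e::field_char_0^'n^'n \<Rightarrow> bool" where
  "reg_ss A \<longleftrightarrow> coprime (charpoly A) (pderiv (charpoly A))"

definition M_rss :: "'e::field_char_0^'n^'n \<Rightarrow> 'e^'n \<Rightarrow> 'e^'n \<Rightarrow> bool" where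
  "M_rss \<xi> x y \<longleftrightarrow> reg_ss \<xi> \<and>
     vec.span {x v* matpow \<xi> i | i. i < CARD('n)} = UNIV \<and>
     vec.span {matpow \<xi> i *v y | i. i < CARD('n)} = UNIV"

definition same_orbit_M ::
  "(('e::field^'n^'n) \<times> ('e^'n) \<times> ('e^'n)) \<Rightarrow> (('e^'n^'n) \<times> ('e^'n) \<times> ('e^'n)) \<Rightarrow> bool" where
  "same_orbit_M a b \<longleftrightarrow> (\<exists>h \<in> GL. case a of (\<xi>, x, y) \<Rightarrow>
       b = (matrix_inv h ** \<xi> ** h, x v* h, matrix_inv h *v y))"

definition sigma_conj :: "('e \<Rightarrow> 'e) \<Rightarrow> 'e::field^'n^'n \<Rightarrow> 'e^'n^'n \<Rightarrow> bool" where
  "sigma_conj cj \<gamma> \<gamma>' \<longleftrightarrow> (\<exists>g \<in> GL. \<gamma>' = matrix_inv g ** \<gamma> ** mbar cj g)"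

definition normal_sigma :: "('e \<Rightarrow> 'e) \<Rightarrow> 'e::field^'n^'n \<Rightarrow> bool" where
  "normal_sigma cj \<gamma> \<longleftrightarrow> invertible (mbar cj \<gamma> ** \<gamma>) \<and>
      mbar cj (mbar cj \<gamma> ** \<gamma>) = mbar cj \<gamma> ** \<gamma>"

definition is_S :: "('e \<Rightarrow> 'e) \<Rightarrow> ('e::field_char_0^'n^'n) set \<Rightarrow> bool" where
  "is_S cj S \<longleftrightarrow>
     (\<forall>\<gamma> \<in> S. \<gamma> \<in> GL \<and> reg_ss (mbar cj \<gamma> ** \<gamma>) \<and> normal_sigma cj \<gamma>) \<and>
     (\<forall>\<gamma> \<in> GL. reg_ss (mbar cj \<gamma> ** \<gamma>) \<longrightarrow> (\<exists>!\<gamma>0 \<in> S. sigma_conj cj \<gamma> \<gamma>0))"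

definition T_sigma :: "('e \<Rightarrow> 'e) \<Rightarrow> 'e::field^'n^'n \<Rightarrow> ('e^'n^'n) set" where
  "T_sigma cj \<gamma> = {g \<in> GL. matrix_inv g ** \<gamma> ** mbar cj g = \<gamma>}"

definition X_rss :: "('e \<Rightarrow> 'e) \<Rightarrow> ('e::field_char_0^'n^'n) set \<Rightarrow>
    (('e^'n^'n) \<times> ('e^'n) \<times> ('e^'n)) set" where
  "X_rss cj S = {(\<gamma>, x, y). \<gamma> \<in> S \<and> x \<in> Fvecs cj \<and> y \<in> Fminus_vecs cj \<and>
                   M_rss (mbar cj \<gamma> ** \<gamma>) x y}"

definition X_equiv :: "('e \<Rightarrow> 'e) \<Rightarrow> (('e::field^'n^'n) \<times> ('e^'n) \<times> ('e^'n)) \<Rightarrow>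
    (('e^'n^'n) \<times> ('e^'n) \<times> ('e^'n)) \<Rightarrow> bool" where
  "X_equiv cj a b \<longleftrightarrow> (case a of (\<gamma>, x, y) \<Rightarrow> case b of (\<gamma>', x', y') \<Rightarrow>
      \<gamma> = \<gamma>' \<and> (\<exists>t \<in> T_sigma cj \<gamma>. x v* t = x' \<and> matrix_inv t *v y = y'))"

definition skew_herm_inv :: "('e \<Rightarrow> 'e) \<Rightarrow> 'e::field^'n^'n \<Rightarrow> bool" where
  "skew_herm_inv cj \<beta> \<longleftrightarrow> invertible \<beta> \<and> mstar cj \<beta> = - \<beta>"

definition U :: "('e \<Rightarrow> 'e) \<Rightarrow> 'e::field^'n^'n \<Rightarrow> ('e^'n^'n) set" where
  "U cj \<beta> = {h. mstar cj h ** \<beta> ** h = \<beta>}"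

definition Nb :: "('e \<Rightarrow> 'e) \<Rightarrow> 'e::field^'n^'n \<Rightarrow> 'e^'n^'n \<Rightarrow> 'e^'n^'n" where
  "Nb cj \<beta> \<zeta> = matrix_inv \<beta> ** mstar cj \<zeta> ** \<beta> ** \<zeta>"

definition normal_beta :: "('e \<Rightarrow> 'e) \<Rightarrow> 'e::field^'n^'n \<Rightarrow> 'e^'n^'n \<Rightarrow> bool" where
  "normal_beta cj \<beta> \<zeta> \<longleftrightarrow> \<zeta> ** Nb cj \<beta> \<zeta> = Nb cj \<beta> \<zeta> ** \<zeta>"

definition UU_orbit :: "('e \<Rightarrow> 'e) \<Rightarrow> 'e::field^'n^'n \<Rightarrow> 'e^'n^'n \<Rightarrow> 'e^'n^'n \<Rightarrow> bool" where
  "UU_orbit cj \<beta> \<zeta> \<zeta>' \<longleftrightarrow> (\<exists>g \<in> U cj \<beta>. \<exists>h \<in> U cj \<beta>. \<zeta>' = matrix_inv g ** \<zeta> ** h)"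

definition UU_rss :: "('e \<Rightarrow> 'e) \<Rightarrow> 'e::field_char_0^'n^'n \<Rightarrow> 'e^'n^'n \<Rightarrow> bool" where
  "UU_rss cj \<beta> \<zeta> \<longleftrightarrow> \<zeta> \<in> GL \<and> reg_ss (Nb cj \<beta> \<zeta>)"

definition norm_image :: "('e \<Rightarrow> 'e) \<Rightarrow> ('e::field^'n^'n) set" where
  "norm_image cj = {mbar cj a ** a | a. a \<in> GL}"

definition is_R :: "('e \<Rightarrow> 'e) \<Rightarrow> 'e::field_char_0^'n^'n \<Rightarrow> ('e^'n^'n) set \<Rightarrow> bool" where
  "is_R cj \<beta> R \<longleftrightarrow>
     (\<forall>\<zeta> \<in> R. UU_rss cj \<beta> \<zeta> \<and> normal_beta cj \<beta> \<zeta> \<and> Nb cj \<beta> \<zeta> \<in> norm_image cj) \<and>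
     (\<forall>\<zeta>. UU_rss cj \<beta> \<zeta> \<and> Nb cj \<beta> \<zeta> \<in> norm_image cj \<longrightarrow>
           (\<exists>!\<zeta>0 \<in> R. UU_orbit cj \<beta> \<zeta> \<zeta>0))"

definition T_U :: "('e \<Rightarrow> 'e) \<Rightarrow> 'e::field^'n^'n \<Rightarrow> 'e^'n^'n \<Rightarrow> ('e^'n^'n) set" where
  "T_U cj \<beta> \<zeta> = {t \<in> U cj \<beta>. t ** \<zeta> = \<zeta> ** t}"

definition Mtriple_Y :: "('e \<Rightarrow> 'e) \<Rightarrow> 'e::field^'n^'n \<Rightarrow> 'e^'n^'n \<Rightarrow> 'e^'n \<Rightarrow>
    (('e^'n^'n) \<times> ('e^'n) \<times> ('e^'n))" where
  "Mtriple_Y cj \<beta> \<zeta> z = (Nb cj \<beta> \<zeta>, z, matrix_inv \<beta> *v vbar cj z)"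

definition Y_rss :: "('e \<Rightarrow> 'e) \<Rightarrow> 'e::field_char_0^'n^'n \<Rightarrow> ('e^'n^'n) set \<Rightarrow>
    (('e^'n^'n) \<times> ('e^'n)) set" where
  "Y_rss cj \<beta> R = {(\<zeta>, z). \<zeta> \<in> R \<and>
       (case Mtriple_Y cj \<beta> \<zeta> z of (\<xi>, x, y) \<Rightarrow> M_rss \<xi> x y)}"

definition Y_equiv :: "('e \<Rightarrow> 'e) \<Rightarrow> 'e::field^'n^'n \<Rightarrow> (('e^'n^'n) \<times> ('e^'n)) \<Rightarrow>
    (('e^'n^'n) \<times> ('e^'n)) \<Rightarrow> bool" where
  "Y_equiv cj \<beta> a b \<longleftrightarrow> (case a of (\<zeta>, z) \<Rightarrow> case b of (\<zeta>', z') \<Rightarrow>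
      \<zeta> = \<zeta>' \<and> (\<exists>t \<in> T_U cj \<beta> \<zeta>. z v* t = z'))"

end

theory Submission
  imports Defs
begin

(* For a regular semisimple [\<xi>, x, y], the vector x is cyclic for \<xi>, so an element of the
   centralizer of \<xi> is determined by its action on x, and the centralizer is commutative.
   In (a), if h carries [\<xi>, x, y] to [\<xi>', x', y'], so does its Galois conjugate, because
   \<xi>, \<xi>', x, x' are defined over F; hence h is F-rational. Then h \<gamma>' h^-1 and \<gamma> have the same
   norm \<xi>, and Hilbert 90 in the commutative centralizer of \<xi> makes \<gamma>' \<sigma>-conjugate to \<gamma>, so
   \<gamma>' = \<gamma> as both are representatives; now h commutes with \<xi>, hence with \<gamma>, i.e. h lies in T_\<gamma>.
   In (b), the condition on y = \<beta>^-1 z^* makes h \<beta>^-1 h^* \<beta> fix z, so h is unitary; then \<zeta>'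
   lies in the U x U-orbit of \<zeta>, so \<zeta>' = \<zeta>, and h commutes with \<beta>^-1 \<zeta>^* \<beta> \<zeta>, hence with \<zeta>.
   The converse implications are direct computations. *)

lemma matrix_inv_inverse:
  fixes A :: "'a::field^'n^'n"
  assumes "invertible A"
  shows matrix_inv_right: "A ** matrix_inv A = mat 1"
    and matrix_inv_left: "matrix_inv A ** A = mat 1"
proof -
  have "\<exists>A'. A ** A' = mat 1 \<and> A' ** A = mat 1" using assms invertible_def by blast
  hence "A ** matrix_inv A = mat 1 \<and> matrix_inv A ** A = mat 1"
    unfolding matrix_inv_def by (rule someI_ex)
  thus "A ** matrix_inv A = mat 1" "matrix_inv A ** A = mat 1" by auto
qed

lemma matrix_inv_unique:
  fixes A B :: "'a::field^'n^'n"
  assumes "A ** B = mat 1"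
  shows "matrix_inv A = B"
proof -
  have "invertible A" using assms invertible_right_inverse by blast
  hence "matrix_inv A ** (A ** B) = B"
    by (simp add: matrix_mul_assoc matrix_inv_left)
  thus ?thesis using assms by simp
qed

lemma invertible_matrix_inv:
  fixes A :: "'a::field^'n^'n"
  shows "invertible A \<Longrightarrow> invertible (matrix_inv A)"
  using matrix_inv_left invertible_right_inverse by blast

lemma matrix_inv_matrix_inv:
  fixes A :: "'a::field^'n^'n"
  shows "invertible A \<Longrightarrow> matrix_inv (matrix_inv A) = A"
  by (simp add: matrix_inv_left matrix_inv_unique)

lemma matrix_inv_mat_1: "matrix_inv (mat 1 :: 'a::field^'n^'n) = mat 1"
  by (simp add: matrix_inv_unique)

lemma matrix_mul_inv_cancel:
  fixes A X :: "'a::field^'n^'n"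
  assumes "invertible A"
  shows matrix_mul_right_inv_cancel: "X ** A ** matrix_inv A = X"
    and matrix_mul_left_inv_cancel: "X ** matrix_inv A ** A = X"
  by (simp_all add: matrix_mul_assoc[symmetric] matrix_inv_right matrix_inv_left assms)

lemma matrix_inv_mult:
  fixes A B :: "'a::field^'n^'n"
  assumes "invertible A" "invertible B"
  shows "matrix_inv (A ** B) = matrix_inv B ** matrix_inv A"
  by (rule matrix_inv_unique)
    (simp add: matrix_mul_assoc matrix_mul_right_inv_cancel assms matrix_inv_right)

lemma matrix_mul_neg:
  fixes A B :: "'a::ring_1^'n^'n"
  shows matrix_mul_neg_left: "(- A) ** B = - (A ** B)"
    and matrix_mul_neg_right: "A ** (- B) = - (A ** B)"
  by (simp_all add: matrix_matrix_mult_def vec_eq_iff sum_negf)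

lemma vector_matrix_mul_neg:
  fixes A :: "'a::ring_1^'n^'n"
  shows vector_matrix_mul_neg_left: "(- v) v* A = - (v v* A)"
    and vector_matrix_mul_neg_right: "v v* (- A) = - (v v* A)"
  by (simp_all add: vector_matrix_mult_def vec_eq_iff sum_negf)

lemma matrix_inv_neg:
  fixes A :: "'a::field^'n^'n"
  shows "invertible A \<Longrightarrow> matrix_inv (- A) = - matrix_inv A"
  by (rule matrix_inv_unique) (simp add: matrix_mul_neg_left matrix_mul_neg_right matrix_inv_right)

lemma matrix_inv_conj_eq_iff:
  fixes A X Y :: "'a::field^'n^'n"
  assumes "invertible A"
  shows "matrix_inv A ** X ** A = Y \<longleftrightarrow> X ** A = A ** Y"
proof -
  have "matrix_inv A ** X ** A = Y \<longleftrightarrow> A ** (matrix_inv A ** X ** A) = A ** Y"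
    by (metis assms matrix_inv_left matrix_mul_assoc matrix_mul_lid)
  also have "A ** (matrix_inv A ** X ** A) = X ** A"
    by (simp add: matrix_mul_assoc matrix_inv_right assms)
  finally show ?thesis .
qed

lemma matrix_inv_commute:
  fixes A B :: "'a::field^'n^'n"
  assumes "invertible A" "A ** B = B ** A"
  shows "matrix_inv A ** B = B ** matrix_inv A"
proof -
  have "matrix_inv A ** B ** A = B"
    using assms by (simp add: matrix_inv_conj_eq_iff)
  hence "matrix_inv A ** B ** A ** matrix_inv A = B ** matrix_inv A" by simp
  thus ?thesis by (simp only: matrix_mul_right_inv_cancel[OF assms(1)])
qed

lemma mat_mult_commute:
  fixes A :: "'a::comm_ring_1^'n^'n"
  shows "mat c ** A = A ** mat c"
  by (simp add: matrix_matrix_mult_def mat_def vec_eq_iff if_distrib if_distribR mult.commute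
      cong: if_cong)

lemma mat_mult_mat: "mat a ** mat b = (mat (a * b) :: 'a::semiring_1^'n^'n)"
proof -
  have "(\<Sum>k\<in>UNIV. (if i = k then a else 0) * (if k = j then b else 0)) =
        (\<Sum>k\<in>UNIV. if k = i then a * (if k = j then b else 0) else 0)" for i j :: 'n
    by (rule sum.cong) auto
  thus ?thesis by (simp add: matrix_matrix_mult_def mat_def vec_eq_iff)
qed

lemma vector_matrix_mul_mat: "(x::'a::comm_ring_1^'n) v* mat c = c *s x"
  by (simp add: vector_matrix_mult_def mat_def vec_eq_iff if_distrib if_distribR mult.commute
      cong: if_cong)

lemma matrix_add_rdistrib: "(A + B) ** C = A ** C + B ** (C::'a::semiring_1^'n^'n)"
  by (simp add: matrix_matrix_mult_def vec_eq_iff sum.distrib distrib_right)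

lemma invertible_mat: "(c::'a::field) \<noteq> 0 \<Longrightarrow> invertible (mat c :: 'a^'n^'n)"
  unfolding invertible_right_inverse by (rule exI[of _ "mat (1/c)"]) (simp add: mat_mult_mat)

lemma finite_singular_shifts:
  fixes a :: "'a::field^'n^'n"
  assumes "invertible a"
  shows "finite {t. \<not> invertible (mat t + a)}"
proof -
  define p where "p = det (\<chi> i j. [:a$i$j, if i = j then 1 else 0:])"
  have p: "poly p t = det (mat t + a)" for t
  proof -
    have "poly (det M) t = det (\<chi> i j. poly (M$i$j) t)" for M :: "'a poly^'n^'n"
      by (simp add: det_def poly_sum poly_prod)
    moreover have "(\<chi> i j. poly [:a$i$j, if i = j then 1 else 0:] t) = mat t + a"
      by (simp add: vec_eq_iff mat_def add.commute)
    ultimately show ?thesis by (simp add: p_def)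
  qed
  have "p \<noteq> 0" using p[of 0] assms by (auto simp: invertible_det_nz)
  hence "finite {t. poly p t = 0}" by (rule poly_roots_finite)
  thus ?thesis by (simp add: p invertible_det_nz)
qed

lemma matpow_0: "matpow A 0 = mat 1"
  and matpow_Suc: "matpow A (Suc k) = matpow A k ** A"
  by (simp_all add: matpow_def)

lemma matpow_commute:
  fixes A B :: "'a::semiring_1^'n^'n"
  assumes "B ** A = A ** B"
  shows "B ** matpow A k = matpow A k ** B"
proof (induction k)
  case (Suc k)
  have "B ** matpow A (Suc k) = (B ** matpow A k) ** A" by (simp add: matpow_Suc matrix_mul_assoc)
  also have "\<dots> = matpow A (Suc k) ** B"
    by (simp only: Suc matpow_Suc assms flip: matrix_mul_assoc)
  finally show ?case .
qed (simp add: matpow_0)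

definition cyclic_vector :: "'a::field^'n^'n \<Rightarrow> 'a^'n \<Rightarrow> bool" where
  "cyclic_vector \<xi> x \<longleftrightarrow> vec.span {x v* matpow \<xi> i | i. i < CARD('n)} = UNIV"

lemma M_rss_cyclic_vector: "M_rss \<xi> x y \<Longrightarrow> cyclic_vector \<xi> x"
  by (simp add: M_rss_def cyclic_vector_def)

lemma cyclic_vector_induct:
  assumes "cyclic_vector \<xi> x" "vec.subspace P" "\<And>i. x v* matpow \<xi> i \<in> P"
  shows "v \<in> P"
proof -
  have "vec.span {x v* matpow \<xi> i | i. i < CARD('n)} \<subseteq> P"
    by (rule vec.span_minimal) (use assms(2,3) in auto)
  thus ?thesis using assms(1) unfolding cyclic_vector_def by auto
qed

lemma cyclic_vector_centralizer_inj:
  fixes \<xi> A B :: "'a::field^'n^'n"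
  assumes x: "cyclic_vector \<xi> x"
    and A: "A ** \<xi> = \<xi> ** A" and B: "B ** \<xi> = \<xi> ** B" and xAB: "x v* A = x v* B"
  shows "A = B"
proof -
  have "v v* A = v v* B" for v
  proof -
    have "v \<in> {v. v v* A = v v* B}"
    proof (rule cyclic_vector_induct[OF x])
      show "vec.subspace {v. v v* A = v v* B}"
        by (rule vec.subspaceI) (auto simp: vector_matrix_left_distrib scalar_vector_matrix_assoc)
      fix i
      have "(x v* matpow \<xi> i) v* A = (x v* A) v* matpow \<xi> i"
        by (simp add: vector_matrix_mul_assoc matpow_commute[OF A])
      also have "\<dots> = (x v* matpow \<xi> i) v* B"
        by (simp add: xAB vector_matrix_mul_assoc matpow_commute[OF B])
      finally show "x v* matpow \<xi> i \<in> {v. v v* A = v v* B}" by simp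
    qed
    thus ?thesis by simp
  qed
  hence "transpose A = transpose B" by (simp add: matrix_eq)
  thus ?thesis by (metis transpose_transpose)
qed

lemma cyclic_vector_fixed_eq_1:
  fixes \<xi> A :: "'a::field^'n^'n"
  assumes "cyclic_vector \<xi> x" "A ** \<xi> = \<xi> ** A" "x v* A = x"
  shows "A = mat 1"
  using cyclic_vector_centralizer_inj[OF assms(1,2)] assms(3) by simp

text \<open>The vectors \<open>x v* P\<close> with \<open>P\<close> in the bicommutant of \<xi> form a subspace containing
  every \<open>x v* matpow \<xi> i\<close>.\<close>

lemma cyclic_vector_bicommutant:
  fixes \<xi> A :: "'a::field^'n^'n"
  assumes "cyclic_vector \<xi> x"
  shows "\<exists>P. (\<forall>B. B ** \<xi> = \<xi> ** B \<longrightarrow> P ** B = B ** P) \<and> x v* A = x v* P"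
proof -
  define bicomm where "bicomm P \<longleftrightarrow> (\<forall>B. B ** \<xi> = \<xi> ** B \<longrightarrow> P ** B = B ** P)" for P
  have "x v* A \<in> {x v* P | P. bicomm P}"
  proof (rule cyclic_vector_induct[OF assms])
    show "vec.subspace {x v* P | P. bicomm P}"
    proof (rule vec.subspaceI)
      show "0 \<in> {x v* P | P. bicomm P}"
        by (intro CollectI exI[of _ 0]) (simp add: bicomm_def)
    next
      fix u v assume "u \<in> {x v* P | P. bicomm P}" "v \<in> {x v* P | P. bicomm P}"
      then obtain P P' where "bicomm P" "bicomm P'" "u + v = x v* (P + P')"
        by (auto simp: vector_matrix_mult_add_rdistrib)
      moreover have "bicomm (P + P')"
        using \<open>bicomm P\<close> \<open>bicomm P'\<close> by (simp add: bicomm_def matrix_add_ldistrib matrix_add_rdistrib)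
      ultimately show "u + v \<in> {x v* P | P. bicomm P}" by blast
    next
      fix c u assume "u \<in> {x v* P | P. bicomm P}"
      then obtain P where "bicomm P" "c *s u = x v* (P ** mat c)"
        by (auto simp: vector_matrix_mul_mat simp flip: vector_matrix_mul_assoc)
      moreover have "bicomm (P ** mat c)"
        using \<open>bicomm P\<close> unfolding bicomm_def by (metis mat_mult_commute matrix_mul_assoc)
      ultimately show "c *s u \<in> {x v* P | P. bicomm P}" by blast
    qed
    show "x v* matpow \<xi> i \<in> {x v* P | P. bicomm P}" for i
      using matpow_commute[of _ \<xi> i] by (auto simp: bicomm_def)
  qed
  thus ?thesis by (auto simp: bicomm_def)
qed

lemma cyclic_vector_centralizer_commute:
  fixes \<xi> A B :: "'a::field^'n^'n"
  assumes x: "cyclic_vector \<xi> x" and A: "A ** \<xi> = \<xi> ** A" and B: "B ** \<xi> = \<xi> ** B"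
  shows "A ** B = B ** A"
proof -
  obtain P where P: "\<forall>C. C ** \<xi> = \<xi> ** C \<longrightarrow> P ** C = C ** P" and xAP: "x v* A = x v* P"
    using cyclic_vector_bicommutant[OF x] by blast
  have "A = P"
    using cyclic_vector_centralizer_inj[OF x A _ xAP] P by metis
  thus ?thesis using P B by simp
qed

locale galois_involution =
  fixes cj :: "'e::field_char_0 \<Rightarrow> 'e"
  assumes quad_involution: "quad_involution cj"
begin

lemma cj_add: "cj (a + b) = cj a + cj b"
  and cj_mult: "cj (a * b) = cj a * cj b"
  and cj_1: "cj 1 = 1"
  and cj_cj [simp]: "cj (cj a) = a"
  using quad_involution by (simp_all add: quad_involution_def)

lemma cj_nontrivial: "\<exists>a. cj a \<noteq> a"
  using quad_involution by (simp add: quad_involution_def)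

lemma cj_0 [simp]: "cj 0 = 0"
  using cj_add[of 0 0] by simp

lemma cj_neg [simp]: "cj (- a) = - cj a"
  using cj_add[of a "- a"] by (simp add: add.inverse_unique)

lemma cj_diff: "cj (a - b) = cj a - cj b"
  using cj_add[of a "- b"] by simp

lemma cj_sum: "cj (sum f A) = (\<Sum>i\<in>A. cj (f i))"
  by (induction A rule: infinite_finite_induct) (auto simp: cj_add)

lemma cj_of_nat [simp]: "cj (of_nat k) = of_nat k"
  by (induction k) (simp_all add: cj_add cj_1)

lemma cj_eq_0_iff [simp]: "cj a = 0 \<longleftrightarrow> a = 0"
  by (metis cj_0 cj_cj)

lemma mbar_mult: "mbar cj (A ** B) = mbar cj A ** mbar cj (B::'e^'n^'n)"
  by (simp add: mbar_def matrix_matrix_mult_def vec_eq_iff cj_sum cj_mult)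

lemma mbar_mat: "mbar cj (mat c :: 'e^'n^'n) = mat (cj c)"
  by (simp add: mbar_def mat_def vec_eq_iff)

lemma mbar_add: "mbar cj (A + B) = mbar cj A + mbar cj (B::'e^'n^'n)"
  by (simp add: mbar_def vec_eq_iff cj_add)

lemma mbar_mbar [simp]: "mbar cj (mbar cj A) = (A::'e^'n^'n)"
  by (simp add: mbar_def vec_eq_iff)

lemma mbar_invertible:
  assumes "invertible (A::'e^'n^'n)"
  shows invertible_mbar: "invertible (mbar cj A)"
    and mbar_matrix_inv: "mbar cj (matrix_inv A) = matrix_inv (mbar cj A)"
proof -
  have "mbar cj A ** mbar cj (matrix_inv A) = mat 1"
    by (simp add: mbar_mult[symmetric] matrix_inv_right assms mbar_mat cj_1)
  thus "invertible (mbar cj A)" "mbar cj (matrix_inv A) = matrix_inv (mbar cj A)"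
    by (auto simp: invertible_right_inverse matrix_inv_unique)
qed

lemma vbar_vbar [simp]: "vbar cj (vbar cj x) = x"
  by (simp add: vbar_def vec_eq_iff)

lemma vbar_vector_matrix_mult: "vbar cj (x v* A) = vbar cj x v* mbar cj (A::'e^'n^'n)"
  by (simp add: vbar_def mbar_def vector_matrix_mult_def vec_eq_iff cj_sum cj_mult)

lemma vbar_matrix_vector_mult: "vbar cj (A *v x) = mbar cj (A::'e^'n^'n) *v vbar cj x"
  by (simp add: vbar_def mbar_def matrix_vector_mult_def vec_eq_iff cj_sum cj_mult)

lemma mstar_mult: "mstar cj (A ** B) = mstar cj (B::'e^'n^'n) ** mstar cj A"
  by (simp add: mstar_def mbar_mult matrix_transpose_mul)

lemma mstar_mstar [simp]: "mstar cj (mstar cj A) = (A::'e^'n^'n)"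
  by (simp add: mstar_def mbar_def transpose_def vec_eq_iff)

lemma mstar_mat_1: "mstar cj (mat 1 :: 'e^'n^'n) = mat 1"
  by (simp add: mstar_def mbar_mat cj_1)

lemma mstar_invertible:
  assumes "invertible (A::'e^'n^'n)"
  shows invertible_mstar: "invertible (mstar cj A)"
    and mstar_matrix_inv: "mstar cj (matrix_inv A) = matrix_inv (mstar cj A)"
proof -
  have "mstar cj (matrix_inv A) ** mstar cj A = mat 1"
    by (simp add: mstar_mult[symmetric] matrix_inv_right assms mstar_mat_1)
  hence "mstar cj A ** mstar cj (matrix_inv A) = mat 1"
    by (simp add: matrix_left_right_inverse)
  thus "invertible (mstar cj A)" "mstar cj (matrix_inv A) = matrix_inv (mstar cj A)"
    by (auto simp: invertible_right_inverse matrix_inv_unique)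
qed

lemma vbar_vector_matrix_mult_mstar: "vbar cj (z v* h) = mstar cj (h::'e^'n^'n) *v vbar cj z"
  by (simp add: vbar_vector_matrix_mult mstar_def)

lemma vbar_matrix_vector_mult_mstar: "vbar cj (h *v z) = vbar cj z v* mstar cj (h::'e^'n^'n)"
  by (simp add: vbar_matrix_vector_mult mstar_def)

lemma exists_conj_ratio_notin:
  assumes "finite A"
  shows "\<exists>\<theta>. cj \<theta> \<noteq> 0 \<and> \<theta> / cj \<theta> \<notin> A"
proof -
  obtain b where b: "cj b \<noteq> b" using cj_nontrivial by blast
  define \<delta> where "\<delta> = b - cj b"
  have cj_\<delta>: "cj \<delta> = - \<delta>" and "\<delta> \<noteq> 0" using b by (simp_all add: \<delta>_def cj_diff)
  define \<theta> where "\<theta> k = of_nat k + \<delta>" for k :: nat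
  have cj_\<theta>: "cj (\<theta> k) = of_nat k - \<delta>" for k
    by (simp add: \<theta>_def cj_add cj_\<delta>)
  have cj_\<theta>_nz: "cj (\<theta> k) \<noteq> 0" for k
  proof
    assume "cj (\<theta> k) = 0"
    hence minus: "of_nat k - \<delta> = 0" by (simp only: cj_\<theta>)
    from \<open>cj (\<theta> k) = 0\<close> have plus: "of_nat k + \<delta> = 0" by (simp only: cj_eq_0_iff \<theta>_def)
    have "2 * \<delta> = (of_nat k + \<delta>) - (of_nat k - \<delta>)" by algebra
    also have "\<dots> = 0" by (simp only: minus plus diff_self)
    finally have "2 * \<delta> = 0" .
    with \<open>\<delta> \<noteq> 0\<close> show False by simp
  qed
  have "inj (\<lambda>k. \<theta> k / cj (\<theta> k))"
  proof (rule injI)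
    fix k m assume "\<theta> k / cj (\<theta> k) = \<theta> m / cj (\<theta> m)"
    hence "\<theta> k * cj (\<theta> m) = \<theta> m * cj (\<theta> k)" by (simp only: frac_eq_eq[OF cj_\<theta>_nz cj_\<theta>_nz])
    hence "\<theta> k * (of_nat m - \<delta>) = \<theta> m * (of_nat k - \<delta>)" by (simp only: cj_\<theta>)
    hence "(of_nat k + \<delta>) * (of_nat m - \<delta>) = (of_nat m + \<delta>) * (of_nat k - \<delta>)"
      by (simp only: \<theta>_def)
    moreover have "(of_nat k + \<delta>) * (of_nat m - \<delta>) - (of_nat m + \<delta>) * (of_nat k - \<delta>) =
        2 * \<delta> * (of_nat m - of_nat k)"
      by algebra
    ultimately have "2 * \<delta> * (of_nat m - of_nat k) = 0" by (metis diff_self)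
    with \<open>\<delta> \<noteq> 0\<close> show "k = m" by simp
  qed
  hence "infinite (range (\<lambda>k. \<theta> k / cj (\<theta> k)))" by (simp add: finite_image_iff)
  hence "\<not> range (\<lambda>k. \<theta> k / cj (\<theta> k)) \<subseteq> A" using assms finite_subset by blast
  then obtain k where "\<theta> k / cj (\<theta> k) \<notin> A" by blast
  thus ?thesis using cj_\<theta>_nz by blast
qed

lemma hilbert90_matrix:
  fixes a :: "'e^'n^'n"
  assumes a: "a ** mbar cj a = mat 1"
  shows "\<exists>c. invertible c \<and> a = c ** matrix_inv (mbar cj c) \<and>
             (\<forall>B. B ** a = a ** B \<longrightarrow> B ** c = c ** B)"
proof -
  have "invertible a" using a invertible_right_inverse by blast
  then obtain \<theta> where \<theta>: "cj \<theta> \<noteq> 0" "invertible (mat (\<theta> / cj \<theta>) + a)"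
    using exists_conj_ratio_notin[OF finite_singular_shifts] by blast
  define c where "c = mat \<theta> + mat (cj \<theta>) ** a"
  have "c = mat (cj \<theta>) ** (mat (\<theta> / cj \<theta>) + a)"
    using \<theta>(1) by (simp add: c_def matrix_add_ldistrib mat_mult_mat)
  hence c_inv: "invertible c" using \<theta> invertible_mat invertible_mult by metis
  have "a ** mbar cj c = a ** mat (cj \<theta>) + (a ** mat \<theta>) ** mbar cj a"
    by (simp add: c_def mbar_add mbar_mult mbar_mat matrix_add_ldistrib matrix_mul_assoc)
  also have "\<dots> = mat (cj \<theta>) ** a + mat \<theta> ** (a ** mbar cj a)"
    by (simp only: mat_mult_commute[symmetric] matrix_mul_assoc)
  finally have "a ** mbar cj c = c" by (simp add: a c_def add.commute)
  hence "a = c ** matrix_inv (mbar cj c)"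
    using matrix_mul_right_inv_cancel[OF invertible_mbar[OF c_inv]] by metis
  moreover have "B ** c = c ** B" if "B ** a = a ** B" for B
  proof -
    have "B ** c = B ** mat \<theta> + (B ** mat (cj \<theta>)) ** a"
      by (simp only: c_def matrix_add_ldistrib matrix_mul_assoc)
    also have "\<dots> = mat \<theta> ** B + mat (cj \<theta>) ** (B ** a)"
      by (simp only: mat_mult_commute[symmetric] matrix_mul_assoc)
    also have "\<dots> = c ** B"
      by (simp only: that c_def matrix_add_rdistrib matrix_mul_assoc)
    finally show ?thesis .
  qed
  ultimately show ?thesis using c_inv by blast
qed

lemma norm_fixed_commute:
  fixes \<gamma> \<xi> :: "'e^'n^'n"
  assumes "mbar cj \<xi> = \<xi>" and \<gamma>: "mbar cj \<gamma> ** \<gamma> = \<xi>"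
  shows "\<gamma> ** mbar cj \<gamma> = \<xi>" "\<gamma> ** \<xi> = \<xi> ** \<gamma>" "mbar cj \<gamma> ** \<xi> = \<xi> ** mbar cj \<gamma>"
proof -
  show \<gamma>': "\<gamma> ** mbar cj \<gamma> = \<xi>"
    using arg_cong[OF \<gamma>, of "mbar cj"] assms(1) by (simp add: mbar_mult)
  have "\<gamma> ** \<xi> = (\<gamma> ** mbar cj \<gamma>) ** \<gamma>" by (simp only: \<gamma>[symmetric] matrix_mul_assoc)
  thus "\<gamma> ** \<xi> = \<xi> ** \<gamma>" by (simp only: \<gamma>')
  have "\<xi> ** mbar cj \<gamma> = mbar cj \<gamma> ** (\<gamma> ** mbar cj \<gamma>)"
    by (simp only: \<gamma>[symmetric] matrix_mul_assoc)
  thus "mbar cj \<gamma> ** \<xi> = \<xi> ** mbar cj \<gamma>" by (simp only: \<gamma>')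
qed

text \<open>Hilbert 90, applied to \<open>\<delta> ** matrix_inv \<gamma>\<close> in the commutative centralizer of \<xi>.\<close>

lemma sigma_conj_of_norm_eq:
  fixes \<gamma> \<delta> \<xi> :: "'e^'n^'n"
  assumes x: "cyclic_vector \<xi> x" and \<xi>: "mbar cj \<xi> = \<xi>" and \<gamma>_inv: "invertible \<gamma>"
    and \<gamma>: "mbar cj \<gamma> ** \<gamma> = \<xi>" and \<delta>: "mbar cj \<delta> ** \<delta> = \<xi>"
  shows "\<exists>c. invertible c \<and> \<delta> = c ** \<gamma> ** matrix_inv (mbar cj c)"
proof -
  note \<gamma>_comm = norm_fixed_commute[OF \<xi> \<gamma>] and \<delta>_comm = norm_fixed_commute[OF \<xi> \<delta>]
  have \<xi>_invertible: "invertible \<xi>"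
    using invertible_mult[OF invertible_mbar[OF \<gamma>_inv] \<gamma>_inv] by (simp only: \<gamma>)
  have \<xi>_inv: "matrix_inv \<xi> = matrix_inv \<gamma> ** matrix_inv (mbar cj \<gamma>)"
    using matrix_inv_mult[OF invertible_mbar[OF \<gamma>_inv] \<gamma>_inv] by (simp only: \<gamma>)
  have \<gamma>_inv_comm: "matrix_inv \<gamma> ** \<xi> = \<xi> ** matrix_inv \<gamma>"
    by (rule matrix_inv_commute[OF \<gamma>_inv \<gamma>_comm(2)])
  define a where "a = \<delta> ** matrix_inv \<gamma>"
  have "\<xi> ** a = (\<xi> ** \<delta>) ** matrix_inv \<gamma>" by (simp only: a_def matrix_mul_assoc)
  also have "\<dots> = \<delta> ** (\<xi> ** matrix_inv \<gamma>)" by (simp only: \<delta>_comm(2)[symmetric] matrix_mul_assoc)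
  also have "\<dots> = a ** \<xi>" by (simp only: \<gamma>_inv_comm[symmetric] a_def matrix_mul_assoc)
  finally have a_comm: "\<xi> ** a = a ** \<xi>" .
  have "a ** mbar cj a = \<delta> ** (matrix_inv \<gamma> ** mbar cj \<delta>) ** matrix_inv (mbar cj \<gamma>)"
    by (simp only: a_def mbar_mult mbar_matrix_inv[OF \<gamma>_inv] matrix_mul_assoc)
  also have "\<dots> = (\<delta> ** mbar cj \<delta>) ** matrix_inv \<xi>"
    by (simp only: cyclic_vector_centralizer_commute[OF x \<gamma>_inv_comm \<delta>_comm(3)] \<xi>_inv
        matrix_mul_assoc)
  also have "\<dots> = mat 1" by (simp only: \<delta>_comm(1) matrix_inv_right[OF \<xi>_invertible])
  finally obtain c where c: "invertible c" "a = c ** matrix_inv (mbar cj c)"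
    and "\<xi> ** c = c ** \<xi>"
    using hilbert90_matrix a_comm by blast
  hence "mbar cj c ** \<xi> = \<xi> ** mbar cj c"
    using \<xi> by (metis mbar_mult)
  hence "matrix_inv (mbar cj c) ** \<xi> = \<xi> ** matrix_inv (mbar cj c)"
    by (rule matrix_inv_commute[OF invertible_mbar[OF c(1)]])
  hence c_comm: "matrix_inv (mbar cj c) ** \<gamma> = \<gamma> ** matrix_inv (mbar cj c)"
    by (rule cyclic_vector_centralizer_commute[OF x _ \<gamma>_comm(2)])
  have "\<delta> = a ** \<gamma>" by (simp only: a_def matrix_mul_left_inv_cancel[OF \<gamma>_inv])
  also have "\<dots> = c ** \<gamma> ** matrix_inv (mbar cj c)"
    by (simp only: c(2) c_comm flip: matrix_mul_assoc)
  finally show ?thesis using c(1) by blast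
qed

lemma sigma_stabilizer_commute_norm:
  fixes \<gamma> t :: "'e^'n^'n"
  assumes normal: "mbar cj (mbar cj \<gamma> ** \<gamma>) = mbar cj \<gamma> ** \<gamma>"
    and t: "invertible t" and t_stab: "matrix_inv t ** \<gamma> ** mbar cj t = \<gamma>"
  shows "t ** (mbar cj \<gamma> ** \<gamma>) = (mbar cj \<gamma> ** \<gamma>) ** t"
proof -
  have "t ** (matrix_inv t ** \<gamma> ** mbar cj t) = t ** \<gamma>" by (simp only: t_stab)
  hence \<gamma>t: "\<gamma> ** mbar cj t = t ** \<gamma>"
    by (simp only: matrix_mul_assoc matrix_inv_right[OF t] matrix_mul_lid)
  hence "mbar cj \<gamma> ** t = mbar cj t ** mbar cj \<gamma>" by (metis mbar_mult mbar_mbar)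
  hence "mbar cj t ** (mbar cj \<gamma> ** \<gamma>) = (mbar cj \<gamma> ** \<gamma>) ** mbar cj t"
    by (metis \<gamma>t matrix_mul_assoc)
  hence "mbar cj (mbar cj t ** (mbar cj \<gamma> ** \<gamma>)) = mbar cj ((mbar cj \<gamma> ** \<gamma>) ** mbar cj t)"
    by (rule arg_cong)
  moreover have "\<gamma> ** mbar cj \<gamma> = mbar cj \<gamma> ** \<gamma>" using normal by (simp only: mbar_mult mbar_mbar)
  ultimately show ?thesis by (simp only: mbar_mult mbar_mbar)
qed

text \<open>The twist \<open>mbar h ** matrix_inv h\<close> commutes with \<xi> and fixes the cyclic vector.\<close>

lemma conj_fixed_of_orbit:
  fixes \<xi> \<xi>' h :: "'e^'n^'n"
  assumes x: "cyclic_vector \<xi> x" and \<xi>: "mbar cj \<xi> = \<xi>" and \<xi>': "mbar cj \<xi>' = \<xi>'"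
    and h: "invertible h" and h\<xi>: "\<xi> ** h = h ** \<xi>'"
    and x_fixed: "vbar cj x = x" and xh_fixed: "vbar cj (x v* h) = x v* h"
  shows "mbar cj h = h"
proof -
  define k where "k = mbar cj h ** matrix_inv h"
  have \<xi>_hbar: "\<xi> ** mbar cj h = mbar cj h ** \<xi>'"
    using arg_cong[OF h\<xi>, of "mbar cj"] by (simp only: mbar_mult \<xi> \<xi>')
  have "matrix_inv h ** \<xi> ** h = \<xi>'" using h\<xi> by (simp only: matrix_inv_conj_eq_iff[OF h])
  hence h_inv_\<xi>: "matrix_inv h ** \<xi> = \<xi>' ** matrix_inv h"
    by (metis matrix_mul_right_inv_cancel[OF h])
  have "k ** \<xi> = mbar cj h ** (matrix_inv h ** \<xi>)" by (simp only: k_def matrix_mul_assoc)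
  also have "\<dots> = (mbar cj h ** \<xi>') ** matrix_inv h" by (simp only: h_inv_\<xi> matrix_mul_assoc)
  also have "\<dots> = \<xi> ** k" by (simp only: \<xi>_hbar[symmetric] k_def matrix_mul_assoc)
  finally have "k ** \<xi> = \<xi> ** k" .
  moreover have "x v* k = x"
  proof -
    have "x v* mbar cj h = x v* h" using xh_fixed by (simp add: vbar_vector_matrix_mult x_fixed)
    hence "x v* k = (x v* h) v* matrix_inv h" by (simp only: k_def flip: vector_matrix_mul_assoc)
    thus ?thesis by (simp add: vector_matrix_mul_assoc matrix_inv_right[OF h])
  qed
  ultimately have "k = mat 1" by (rule cyclic_vector_fixed_eq_1[OF x])
  thus ?thesis by (metis k_def matrix_mul_left_inv_cancel[OF h] matrix_mul_lid)
qed

lemma sigma_conj_of_rational_orbit: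
  fixes \<gamma> \<gamma>' \<xi> \<xi>' h :: "'e^'n^'n"
  assumes x: "cyclic_vector \<xi> x" and \<xi>: "mbar cj \<xi> = \<xi>" and \<gamma>_inv: "invertible \<gamma>"
    and \<gamma>: "mbar cj \<gamma> ** \<gamma> = \<xi>" and \<gamma>': "mbar cj \<gamma>' ** \<gamma>' = \<xi>'"
    and h: "invertible h" and h_fixed: "mbar cj h = h" and h\<xi>: "\<xi> ** h = h ** \<xi>'"
  shows "sigma_conj cj \<gamma> \<gamma>'"
proof -
  define \<delta> where "\<delta> = h ** \<gamma>' ** matrix_inv h"
  have "mbar cj \<delta> = h ** mbar cj \<gamma>' ** matrix_inv h"
    by (simp only: \<delta>_def mbar_mult mbar_matrix_inv[OF h] h_fixed)
  hence "mbar cj \<delta> ** \<delta> = h ** mbar cj \<gamma>' ** (matrix_inv h ** h) ** \<gamma>' ** matrix_inv h"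
    by (simp only: \<delta>_def matrix_mul_assoc)
  also have "\<dots> = h ** (mbar cj \<gamma>' ** \<gamma>') ** matrix_inv h"
    by (simp only: matrix_inv_left[OF h] matrix_mul_rid matrix_mul_assoc)
  also have "\<dots> = \<xi>" by (simp only: \<gamma>' h\<xi>[symmetric] matrix_mul_right_inv_cancel[OF h])
  finally obtain c where c: "invertible c" "\<delta> = c ** \<gamma> ** matrix_inv (mbar cj c)"
    using sigma_conj_of_norm_eq[OF x \<xi> \<gamma>_inv \<gamma>] by blast
  define g where "g = matrix_inv c ** h"
  have "invertible g" by (simp add: g_def invertible_mult invertible_matrix_inv c(1) h)
  have "\<gamma>' = matrix_inv h ** \<delta> ** h"
    by (simp only: \<delta>_def matrix_mul_assoc matrix_mul_left_inv_cancel[OF h] matrix_inv_left[OF h]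
        matrix_mul_lid)
  also have "\<dots> = matrix_inv g ** \<gamma> ** mbar cj g"
    by (simp add: c(2) g_def matrix_inv_mult invertible_matrix_inv c(1) h matrix_inv_matrix_inv
        mbar_mult mbar_matrix_inv h_fixed matrix_mul_assoc)
  finally show ?thesis using \<open>invertible g\<close> by (auto simp: sigma_conj_def GL_def)
qed

lemma sigma_conj_refl: "sigma_conj cj \<gamma> (\<gamma>::'e^'n^'n)"
  unfolding sigma_conj_def GL_def
  by (rule bexI[of _ "mat 1"]) (simp_all add: matrix_inv_mat_1 mbar_mat cj_1 invertible_mat)

lemma X_equiv_iff_same_orbit:
  fixes S :: "('e^'n^'n) set"
  assumes S: "is_S cj S"
    and X: "(\<gamma>, x, y) \<in> X_rss cj S" and X': "(\<gamma>', x', y') \<in> X_rss cj S"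
  shows "X_equiv cj (\<gamma>, x, y) (\<gamma>', x', y') \<longleftrightarrow>
         same_orbit_M (mbar cj \<gamma> ** \<gamma>, x, y) (mbar cj \<gamma>' ** \<gamma>', x', y')"
proof -
  define \<xi> where "\<xi> = mbar cj \<gamma> ** \<gamma>"
  define \<xi>' where "\<xi>' = mbar cj \<gamma>' ** \<gamma>'"
  have "\<gamma> \<in> S" "\<gamma>' \<in> S" and x: "cyclic_vector \<xi> x"
    and x_fixed: "vbar cj x = x" and x'_fixed: "vbar cj x' = x'"
    using X X' by (auto simp: X_rss_def \<xi>_def M_rss_cyclic_vector Fvecs_def vbar_def vec_eq_iff)
  hence \<gamma>_inv: "invertible \<gamma>" and "reg_ss \<xi>" and \<xi>: "mbar cj \<xi> = \<xi>" and \<xi>': "mbar cj \<xi>' = \<xi>'"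
    using S by (auto simp: is_S_def GL_def normal_sigma_def \<xi>_def \<xi>'_def)
  have unique: "\<exists>!\<gamma>0 \<in> S. sigma_conj cj \<gamma> \<gamma>0"
    using S \<gamma>_inv \<open>reg_ss \<xi>\<close> by (auto simp: is_S_def GL_def \<xi>_def)
  show ?thesis unfolding \<xi>_def[symmetric] \<xi>'_def[symmetric]
  proof
    assume "X_equiv cj (\<gamma>, x, y) (\<gamma>', x', y')"
    then obtain t where "\<gamma>' = \<gamma>" "invertible t" "matrix_inv t ** \<gamma> ** mbar cj t = \<gamma>"
      "x' = x v* t" "y' = matrix_inv t *v y"
      by (auto simp: X_equiv_def T_sigma_def GL_def)
    moreover from this have "matrix_inv t ** \<xi> ** t = \<xi>"
      using sigma_stabilizer_commute_norm[of \<gamma> t] \<xi>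
      by (simp add: \<xi>_def matrix_inv_conj_eq_iff)
    ultimately show "same_orbit_M (\<xi>, x, y) (\<xi>', x', y')"
      by (auto simp: same_orbit_M_def GL_def \<xi>_def \<xi>'_def)
  next
    assume "same_orbit_M (\<xi>, x, y) (\<xi>', x', y')"
    then obtain h where h: "invertible h" and "matrix_inv h ** \<xi> ** h = \<xi>'"
      and x': "x' = x v* h" and y': "y' = matrix_inv h *v y"
      by (auto simp: same_orbit_M_def GL_def)
    hence h\<xi>: "\<xi> ** h = h ** \<xi>'" by (simp add: matrix_inv_conj_eq_iff)
    have h_fixed: "mbar cj h = h"
      using conj_fixed_of_orbit[OF x \<xi> \<xi>' h h\<xi> x_fixed] x'_fixed x' by simp
    have "sigma_conj cj \<gamma> \<gamma>'"
      using sigma_conj_of_rational_orbit[OF x \<xi> \<gamma>_inv _ _ h h_fixed h\<xi>] by (simp add: \<xi>_def \<xi>'_def)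
    hence "\<gamma>' = \<gamma>" using unique \<open>\<gamma> \<in> S\<close> \<open>\<gamma>' \<in> S\<close> sigma_conj_refl by blast
    hence "h ** \<xi> = \<xi> ** h" using h\<xi> by (simp add: \<xi>_def \<xi>'_def)
    hence "\<gamma> ** h = h ** \<gamma>"
      using cyclic_vector_centralizer_commute[OF x] norm_fixed_commute(2)[OF \<xi> \<xi>_def[symmetric]]
      by metis
    hence "matrix_inv h ** \<gamma> ** mbar cj h = \<gamma>" by (simp add: h_fixed matrix_inv_conj_eq_iff h)
    thus "X_equiv cj (\<gamma>, x, y) (\<gamma>', x', y')"
      using \<open>\<gamma>' = \<gamma>\<close> h x' y' by (auto simp: X_equiv_def T_sigma_def GL_def)
  qed
qed

lemma U_matrix_inv:
  fixes \<beta> h :: "'e^'n^'n"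
  assumes \<beta>: "invertible \<beta>" and h: "h \<in> U cj \<beta>"
  shows invertible_U: "invertible h"
    and matrix_inv_U: "matrix_inv h = matrix_inv \<beta> ** mstar cj h ** \<beta>"
proof -
  have "(matrix_inv \<beta> ** mstar cj h ** \<beta>) ** h = mat 1"
    using h by (simp add: U_def matrix_inv_left[OF \<beta>] flip: matrix_mul_assoc)
  hence "h ** (matrix_inv \<beta> ** mstar cj h ** \<beta>) = mat 1" by (simp add: matrix_left_right_inverse)
  thus "invertible h" "matrix_inv h = matrix_inv \<beta> ** mstar cj h ** \<beta>"
    by (auto simp: invertible_right_inverse matrix_inv_unique)
qed

lemma U_1: "mat 1 \<in> U cj (\<beta>::'e^'n^'n)"
  by (simp add: U_def mstar_mat_1)

lemma Nb_mult_U: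
  fixes \<beta> \<zeta> t :: "'e^'n^'n"
  assumes \<beta>: "invertible \<beta>" and t: "t \<in> U cj \<beta>"
  shows "Nb cj \<beta> (\<zeta> ** t) = matrix_inv t ** Nb cj \<beta> \<zeta> ** t"
  by (simp add: Nb_def matrix_inv_U[OF \<beta> t] mstar_mult matrix_mul_right_inv_cancel[OF \<beta>]
      matrix_mul_assoc)

lemma Nb_U_mult:
  fixes \<beta> \<zeta> t :: "'e^'n^'n"
  assumes t: "t \<in> U cj \<beta>"
  shows "Nb cj \<beta> (t ** \<zeta>) = Nb cj \<beta> \<zeta>"
proof -
  have t_cancel: "X ** mstar cj t ** \<beta> ** t = X ** \<beta>" for X
    using t by (simp add: U_def flip: matrix_mul_assoc)
  show ?thesis by (simp only: Nb_def mstar_mult matrix_mul_assoc t_cancel)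
qed

lemma U_of_Nb_eq:
  fixes \<beta> \<zeta> \<eta> :: "'e^'n^'n"
  assumes \<beta>: "invertible \<beta>" and \<zeta>: "invertible \<zeta>" and eq: "Nb cj \<beta> \<eta> = Nb cj \<beta> \<zeta>"
  shows "\<eta> ** matrix_inv \<zeta> \<in> U cj \<beta>"
proof -
  have Nb: "mstar cj \<xi> ** \<beta> ** \<xi> = \<beta> ** Nb cj \<beta> \<xi>" for \<xi>
    by (simp add: Nb_def matrix_inv_right[OF \<beta>] matrix_mul_assoc)
  have "mstar cj (\<eta> ** matrix_inv \<zeta>) ** \<beta> ** (\<eta> ** matrix_inv \<zeta>)
      = matrix_inv (mstar cj \<zeta>) ** (mstar cj \<eta> ** \<beta> ** \<eta>) ** matrix_inv \<zeta>"
    by (simp add: mstar_mult mstar_matrix_inv[OF \<zeta>] matrix_mul_assoc)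
  also have "\<dots> = matrix_inv (mstar cj \<zeta>) ** (mstar cj \<zeta> ** \<beta> ** \<zeta>) ** matrix_inv \<zeta>"
    by (simp only: Nb eq)
  also have "\<dots> = \<beta>"
    by (simp add: matrix_mul_assoc matrix_mul_right_inv_cancel[OF \<zeta>]
        matrix_inv_left[OF invertible_mstar[OF \<zeta>]])
  finally show ?thesis by (simp add: U_def)
qed

lemma mstar_matrix_inv_skew:
  fixes \<beta> :: "'e^'n^'n"
  assumes "skew_herm_inv cj \<beta>"
  shows "mstar cj (matrix_inv \<beta>) = - matrix_inv \<beta>"
  using assms by (simp add: skew_herm_inv_def mstar_matrix_inv matrix_inv_neg)

lemma Nb_selfadjoint:
  fixes \<beta> \<zeta> :: "'e^'n^'n"
  assumes \<beta>: "skew_herm_inv cj \<beta>"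
  shows "\<beta> ** Nb cj \<beta> \<zeta> = mstar cj (Nb cj \<beta> \<zeta>) ** \<beta>"
proof -
  have \<beta>_inv: "invertible \<beta>" and \<beta>_star: "mstar cj \<beta> = - \<beta>" using \<beta> by (auto simp: skew_herm_inv_def)
  have "mstar cj (Nb cj \<beta> \<zeta>) = mstar cj \<zeta> ** \<beta> ** \<zeta> ** matrix_inv \<beta>"
    by (simp add: Nb_def mstar_mult \<beta>_star mstar_matrix_inv_skew[OF \<beta>] matrix_mul_neg_left
        matrix_mul_neg_right matrix_mul_assoc)
  thus ?thesis
    by (simp add: Nb_def matrix_inv_right[OF \<beta>_inv] matrix_mul_left_inv_cancel[OF \<beta>_inv]
        matrix_mul_assoc)
qed

lemma vbar_U:
  fixes \<beta> h :: "'e^'n^'n"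
  assumes \<beta>: "invertible \<beta>" and h: "h \<in> U cj \<beta>"
  shows "matrix_inv \<beta> *v vbar cj (z v* h) = matrix_inv h *v (matrix_inv \<beta> *v vbar cj z)"
  by (simp add: matrix_inv_U[OF \<beta> h] vbar_vector_matrix_mult_mstar matrix_vector_mul_assoc
      matrix_mul_right_inv_cancel[OF \<beta>])

lemma twist_commute_of_selfadjoint:
  fixes \<beta> N N' h :: "'e^'n^'n"
  assumes \<beta>: "invertible \<beta>"
    and N: "\<beta> ** N = mstar cj N ** \<beta>" and N': "\<beta> ** N' = mstar cj N' ** \<beta>"
    and hN: "N ** h = h ** N'"
  shows "(h ** matrix_inv \<beta> ** mstar cj h ** \<beta>) ** N = N ** (h ** matrix_inv \<beta> ** mstar cj h ** \<beta>)"
proof -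
  have N'_\<beta>: "matrix_inv \<beta> ** mstar cj N' = N' ** matrix_inv \<beta>"
    using N' by (metis matrix_inv_conj_eq_iff[OF invertible_matrix_inv[OF \<beta>]]
        matrix_inv_matrix_inv[OF \<beta>] matrix_mul_assoc matrix_mul_left_inv_cancel[OF \<beta>]
        matrix_inv_left[OF \<beta>] matrix_mul_lid)
  have N_X: "X ** \<beta> ** N = X ** mstar cj N ** \<beta>" for X
    by (simp only: N flip: matrix_mul_assoc)
  have "(h ** matrix_inv \<beta> ** mstar cj h ** \<beta>) ** N
      = h ** matrix_inv \<beta> ** mstar cj (N ** h) ** \<beta>"
    by (simp only: N_X mstar_mult matrix_mul_assoc)
  also have "\<dots> = h ** (matrix_inv \<beta> ** mstar cj N') ** mstar cj h ** \<beta>"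
    by (simp only: hN mstar_mult matrix_mul_assoc)
  also have "\<dots> = N ** (h ** matrix_inv \<beta> ** mstar cj h ** \<beta>)"
    by (simp only: N'_\<beta> hN[symmetric] matrix_mul_assoc)
  finally show ?thesis .
qed

text \<open>The twist \<open>h ** matrix_inv \<beta> ** mstar h ** \<beta>\<close> commutes with \<open>Nb \<beta> \<zeta>\<close> and fixes the
  cyclic vector z.\<close>

lemma unitary_of_orbit:
  fixes \<beta> \<zeta> \<zeta>' h :: "'e^'n^'n"
  assumes \<beta>: "skew_herm_inv cj \<beta>" and h: "invertible h" and z: "cyclic_vector (Nb cj \<beta> \<zeta>) z"
    and hN: "Nb cj \<beta> \<zeta> ** h = h ** Nb cj \<beta> \<zeta>'"
    and hz: "matrix_inv \<beta> *v vbar cj (z v* h) = matrix_inv h *v (matrix_inv \<beta> *v vbar cj z)"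
  shows "h \<in> U cj \<beta>"
proof -
  have \<beta>_inv: "invertible \<beta>" using \<beta> by (simp add: skew_herm_inv_def)
  have hs: "invertible (mstar cj h)" by (rule invertible_mstar[OF h])
  define m where "m = h ** matrix_inv \<beta> ** mstar cj h ** \<beta>"
  have "vbar cj (matrix_inv \<beta> *v vbar cj (z v* h))
      = vbar cj (matrix_inv h *v (matrix_inv \<beta> *v vbar cj z))" by (simp only: hz)
  hence zh: "(z v* h) v* matrix_inv \<beta> = (z v* matrix_inv \<beta>) v* matrix_inv (mstar cj h)"
    by (simp add: vbar_matrix_vector_mult_mstar mstar_matrix_inv_skew[OF \<beta>] mstar_matrix_inv[OF h]
        vector_matrix_mul_neg_right vector_matrix_mul_neg_left)
  have "z v* m = ((z v* h) v* matrix_inv \<beta>) v* (mstar cj h ** \<beta>)"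
    by (simp only: m_def vector_matrix_mul_assoc matrix_mul_assoc)
  also have "\<dots> = z v* (matrix_inv \<beta> ** (matrix_inv (mstar cj h) ** mstar cj h) ** \<beta>)"
    unfolding zh by (simp only: vector_matrix_mul_assoc matrix_mul_assoc)
  also have "\<dots> = z"
    by (simp only: matrix_inv_left[OF hs] matrix_inv_left[OF \<beta>_inv] matrix_mul_rid
        vector_matrix_mul_rid)
  finally have "z v* m = z" .
  moreover have "m ** Nb cj \<beta> \<zeta> = Nb cj \<beta> \<zeta> ** m"
    unfolding m_def
    by (rule twist_commute_of_selfadjoint[OF \<beta>_inv Nb_selfadjoint[OF \<beta>] Nb_selfadjoint[OF \<beta>] hN])
  ultimately have "m = mat 1" by (intro cyclic_vector_fixed_eq_1[OF z])
  hence "(h ** matrix_inv \<beta>) ** (mstar cj h ** \<beta>) = mat 1" by (simp only: m_def matrix_mul_assoc)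
  hence "(mstar cj h ** \<beta>) ** (h ** matrix_inv \<beta>) ** \<beta> = mat 1 ** \<beta>"
    by (simp only: matrix_left_right_inverse[of "h ** matrix_inv \<beta>"])
  thus ?thesis
    by (simp only: U_def mem_Collect_eq matrix_mul_assoc matrix_mul_left_inv_cancel[OF \<beta>_inv]
        matrix_mul_lid)
qed

lemma UU_orbit_of_unitary:
  fixes \<beta> \<zeta> \<zeta>' h :: "'e^'n^'n"
  assumes \<beta>: "invertible \<beta>" and \<zeta>: "invertible \<zeta>" and \<zeta>': "invertible \<zeta>'"
    and h: "h \<in> U cj \<beta>" and hN: "Nb cj \<beta> \<zeta> ** h = h ** Nb cj \<beta> \<zeta>'"
  shows "UU_orbit cj \<beta> \<zeta> \<zeta>'"
proof -
  have h_inv: "invertible h" by (rule invertible_U[OF \<beta> h])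
  define \<eta> where "\<eta> = \<zeta>' ** matrix_inv h"
  have \<eta>h: "\<eta> ** h = \<zeta>'" by (simp only: \<eta>_def matrix_mul_left_inv_cancel[OF h_inv])
  have "matrix_inv h ** Nb cj \<beta> \<eta> ** h = Nb cj \<beta> \<zeta>'"
    by (simp only: Nb_mult_U[OF \<beta> h, symmetric] \<eta>h)
  also have "\<dots> = matrix_inv h ** Nb cj \<beta> \<zeta> ** h"
    using hN by (simp only: matrix_inv_conj_eq_iff[OF h_inv] eq_commute[of "Nb cj \<beta> \<zeta>'"])
  finally have "Nb cj \<beta> \<zeta> = Nb cj \<beta> \<eta>"
    by (metis matrix_mul_assoc matrix_mul_right_inv_cancel[OF h_inv] matrix_inv_left[OF h_inv]
        matrix_mul_lid)
  hence g: "\<zeta> ** matrix_inv \<eta> \<in> U cj \<beta>"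
    by (rule U_of_Nb_eq[OF \<beta> invertible_mult[OF \<zeta>' invertible_matrix_inv[OF h_inv]], folded \<eta>_def])
  have "\<zeta>' = matrix_inv (\<zeta> ** matrix_inv \<eta>) ** \<zeta> ** h"
    by (simp add: matrix_inv_mult \<zeta> \<eta>_def invertible_mult invertible_matrix_inv \<zeta>' h_inv
        matrix_inv_matrix_inv matrix_mul_left_inv_cancel[OF \<zeta>] \<eta>h[unfolded \<eta>_def])
  thus ?thesis unfolding UU_orbit_def using g h by blast
qed

lemma UU_orbit_refl: "UU_orbit cj \<beta> \<zeta> (\<zeta>::'e^'n^'n)"
  unfolding UU_orbit_def using U_1 by (metis matrix_inv_mat_1 matrix_mul_lid matrix_mul_rid)

lemma Y_equiv_iff_same_orbit:
  fixes \<beta> :: "'e^'n^'n" and R :: "('e^'n^'n) set"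
  assumes \<beta>: "skew_herm_inv cj \<beta>" and R: "is_R cj \<beta> R"
    and Y: "(\<zeta>, z) \<in> Y_rss cj \<beta> R" and Y': "(\<zeta>', z') \<in> Y_rss cj \<beta> R"
  shows "Y_equiv cj \<beta> (\<zeta>, z) (\<zeta>', z') \<longleftrightarrow>
         same_orbit_M (Mtriple_Y cj \<beta> \<zeta> z) (Mtriple_Y cj \<beta> \<zeta>' z')"
proof -
  define N where "N = Nb cj \<beta> \<zeta>"
  have \<beta>_inv: "invertible \<beta>" using \<beta> by (simp add: skew_herm_inv_def)
  have "\<zeta> \<in> R" "\<zeta>' \<in> R" and z: "cyclic_vector N z"
    using Y Y' by (auto simp: Y_rss_def Mtriple_Y_def N_def M_rss_cyclic_vector)
  hence \<zeta>: "invertible \<zeta>" and \<zeta>': "invertible \<zeta>'" and \<zeta>N: "\<zeta> ** N = N ** \<zeta>"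
    and unique: "\<exists>!\<zeta>0 \<in> R. UU_orbit cj \<beta> \<zeta> \<zeta>0"
    using R by (auto simp: is_R_def UU_rss_def GL_def normal_beta_def N_def)
  show ?thesis
  proof
    assume "Y_equiv cj \<beta> (\<zeta>, z) (\<zeta>', z')"
    then obtain t where "\<zeta>' = \<zeta>" "t \<in> U cj \<beta>" "t ** \<zeta> = \<zeta> ** t" "z' = z v* t"
      by (auto simp: Y_equiv_def T_U_def)
    moreover from this have "Nb cj \<beta> \<zeta> = matrix_inv t ** Nb cj \<beta> \<zeta> ** t"
      by (metis Nb_U_mult Nb_mult_U[OF \<beta>_inv])
    moreover from calculation have "invertible t"
      "matrix_inv \<beta> *v vbar cj (z v* t) = matrix_inv t *v (matrix_inv \<beta> *v vbar cj z)"
      by (simp_all add: invertible_U[OF \<beta>_inv] vbar_U[OF \<beta>_inv])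
    ultimately show "same_orbit_M (Mtriple_Y cj \<beta> \<zeta> z) (Mtriple_Y cj \<beta> \<zeta>' z')"
      by (auto simp: same_orbit_M_def Mtriple_Y_def GL_def intro!: bexI[of _ t])
  next
    assume "same_orbit_M (Mtriple_Y cj \<beta> \<zeta> z) (Mtriple_Y cj \<beta> \<zeta>' z')"
    then obtain h where h: "invertible h" and "matrix_inv h ** N ** h = Nb cj \<beta> \<zeta>'"
      and z': "z' = z v* h"
      and hz: "matrix_inv \<beta> *v vbar cj (z v* h) = matrix_inv h *v (matrix_inv \<beta> *v vbar cj z)"
      by (auto simp: same_orbit_M_def Mtriple_Y_def GL_def N_def)
    hence hN: "N ** h = h ** Nb cj \<beta> \<zeta>'" by (simp add: matrix_inv_conj_eq_iff)
    have "h \<in> U cj \<beta>" by (rule unitary_of_orbit[OF \<beta> h z[unfolded N_def] hN[unfolded N_def] hz])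
    hence "\<zeta>' = \<zeta>"
      using UU_orbit_of_unitary[OF \<beta>_inv \<zeta> \<zeta>'] hN unique \<open>\<zeta> \<in> R\<close> \<open>\<zeta>' \<in> R\<close> UU_orbit_refl
      by (metis N_def)
    hence "h ** \<zeta> = \<zeta> ** h"
      using cyclic_vector_centralizer_commute[OF z _ \<zeta>N] hN by (metis N_def)
    thus "Y_equiv cj \<beta> (\<zeta>, z) (\<zeta>', z')"
      using \<open>h \<in> U cj \<beta>\<close> \<open>\<zeta>' = \<zeta>\<close> z' by (auto simp: Y_equiv_def T_U_def)
  qed
qed

end

theorem mainTheorem11:
  fixes cj :: "'e::field_char_0 \<Rightarrow> 'e"
    and S :: "('e^'n^'n) set"
    and \<beta> :: "'e^'n^'n"
    and R :: "('e^'n^'n) set"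
  assumes "quad_involution cj"
    and "is_S cj S"
    and "skew_herm_inv cj \<beta>"
    and "is_R cj \<beta> R"
  shows "(\<forall>\<gamma> x y \<gamma>' x' y'. (\<gamma>, x, y) \<in> X_rss cj S \<longrightarrow> (\<gamma>', x', y') \<in> X_rss cj S \<longrightarrow>
            (X_equiv cj (\<gamma>, x, y) (\<gamma>', x', y') \<longleftrightarrow>
             same_orbit_M (mbar cj \<gamma> ** \<gamma>, x, y) (mbar cj \<gamma>' ** \<gamma>', x', y')))
       \<and> (\<forall>\<zeta> z \<zeta>' z'. (\<zeta>, z) \<in> Y_rss cj \<beta> R \<longrightarrow> (\<zeta>', z') \<in> Y_rss cj \<beta> R \<longrightarrow>
            (Y_equiv cj \<beta> (\<zeta>, z) (\<zeta>', z') \<longleftrightarrow>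
             same_orbit_M (Mtriple_Y cj \<beta> \<zeta> z) (Mtriple_Y cj \<beta> \<zeta>' z')))"
proof -
  interpret galois_involution cj by unfold_locales (rule assms(1))
  show ?thesis
    using X_equiv_iff_same_orbit[OF assms(2)] Y_equiv_iff_same_orbit[OF assms(3,4)] by blast
qed

end
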